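(* Let $\beta\in\mathbb{F}_{p^m}\setminus\{0\}$. The $(\alpha+\beta u)$-constacyclic codes of length $4p^s$ over $R$, i.e. the ideals of $\mathcal{R}_{\alpha,\beta}=R[x]/\langle x^{4p^s}-(\alpha+\beta u)\rangle$, are exactly the principal ideals $$\left\langle\left(x^2+\gamma x+\tfrac{\gamma^2}{2}\right)^i\left(x^2-\gamma x+\tfrac{\gamma^2}{2}\right)^j\right\rangle,\qquad 0\le i,j\le 2p^s.$$
   Context: Let $p$ be an odd prime and $m,s$ positive integers with $p^m\equiv 3\pmod 4$; $\mathbb{F}_{p^m}$ is the field with $p^m$ elements and $R=\mathbb{F}_{p^m}[u]/\langle u^2\rangle$. Fix $\alpha\in\mathbb{F}_{p^m}\setminus\{0\}$ that is not a square in $\mathbb{F}_{p^m}$, let $\alpha_0\in\mathbb{F}_{p^m}$ satisfy $\alpha_0^{p^s}=\alpha$, and let $\gamma\in\mathbb{F}_{p^m}$ satisfy $\gamma^4+4\alpha_0=0$. For a unit $\lambda\in R$, a $\lambda$-constacyclic code of length $n$ over $R$ is an $R$-submodule $\mathcal{C}\subseteq R^n$ closed under $(c_0,\dots,c_{n-1})\mapsto(\lambda c_{n-1},c_0,\dots,c_{n-2})$; via $(c_0,\dots,c_{n-1})\mapsto\sum c_ix^i$ these are identified with the ideals of $R[x]/\langle x^n-\lambda\rangle$. *)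

theory Defs
  imports "HOL-Computational_Algebra.Polynomial"
begin

text \<open>An element D a b represents a + b u with u^2 = 0.\<close>

datatype 'a dnum = D (re: 'a) (du: 'a)

instantiation dnum :: (comm_ring_1) comm_ring_1
begin
definition "0 = D 0 0"
definition "1 = D 1 0"
definition "x + y = D (re x + re y) (du x + du y)"
definition "x - y = D (re x - re y) (du x - du y)"
definition "- x = D (- re x) (- du x)"
definition "x * y = D (re x * re y) (re x * du y + du x * re y)"
instance
  by standard
     (auto simp: zero_dnum_def one_dnum_def plus_dnum_def minus_dnum_def
        uminus_dnum_def times_dnum_def algebra_simps intro: dnum.expand)
end

definition cshift :: "'r::comm_ring_1 \<Rightarrow> 'r list \<Rightarrow> 'r list" where
  "cshift lam c = (lam * last c) # butlast c"

definition constacyclic_code :: "nat \<Rightarrow> 'r::comm_ring_1 \<Rightarrow> 'r list set \<Rightarrow> bool" where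
  "constacyclic_code n lam C \<longleftrightarrow>
     C \<subseteq> {c. length c = n} \<and>
     replicate n 0 \<in> C \<and>
     (\<forall>c\<in>C. \<forall>d\<in>C. map2 (+) c d \<in> C) \<and>
     (\<forall>r. \<forall>c\<in>C. map ((*) r) c \<in> C) \<and>
     (\<forall>c\<in>C. cshift lam c \<in> C)"

text \<open>Coefficient vector (length n) of the residue of f modulo x^n - lam,
  i.e. the canonical representative of f in R[x]/<x^n - lam>
  (using x^n = lam).\<close>

definition reduce_vec :: "nat \<Rightarrow> 'r::comm_ring_1 \<Rightarrow> 'r poly \<Rightarrow> 'r list" where
  "reduce_vec n lam f =
     map (\<lambda>i. \<Sum>k\<le>degree f. if k mod n = i then coeff f k * lam ^ (k div n) else 0)
         [0..<n]"

definition principal_code :: "nat \<Rightarrow> 'r::comm_ring_1 \<Rightarrow> 'r poly \<Rightarrow> 'r list set" where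
  "principal_code n lam g = {reduce_vec n lam (a * g) | a. True}"

abbreviation emb :: "'a::comm_ring_1 \<Rightarrow> 'a dnum" where
  "emb a \<equiv> D a 0"

end

theory Submission
  imports Defs "HOL-Number_Theory.Residues"
begin

text \<open>Sending \<open>u\<close> to \<open>\<beta>\<^sup>-\<^sup>1 (x\<^sup>n - \<alpha>)\<close> identifies \<open>R[x]/\<langle>x\<^sup>n - (\<alpha> + \<beta>u)\<rangle>\<close>
  with \<open>F[x]/\<langle>(x\<^sup>n - \<alpha>)\<^sup>2\<rangle>\<close>, so the \<open>(\<alpha> + \<beta>u)\<close>-constacyclic codes of length \<open>n\<close>
  correspond to the ideals of this quotient of the principal ideal domain \<open>F[x]\<close>, that is, to
  the monic divisors of \<open>(x\<^sup>n - \<alpha>)\<^sup>2\<close>. For \<open>n = 4p\<^sup>s\<close> the Frobenius map gives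
  \<open>x\<^sup>n - \<alpha> = (x\<^sup>4 - \<alpha>\<^sub>0)\<^bsup>p\<^sup>s\<^esup>\<close>, and \<open>x\<^sup>4 - \<alpha>\<^sub>0\<close> is the product of the two
  quadratics \<open>x\<^sup>2 \<plusminus> \<gamma>x + \<gamma>\<^sup>2/2\<close>, which are irreducible because a root of either
  would exhibit \<open>\<alpha>\<^sub>0 = -(\<gamma>\<^sup>2/2)\<^sup>2\<close> as a square. So the monic divisors of \<open>(x\<^sup>n - \<alpha>)\<^sup>2\<close>
  are the products of powers of the two quadratics with exponents at most \<open>2p\<^sup>s\<close>.\<close>

(* HOL-Algebra, loaded by Residues for CHAR_dvd_CARD, would shadow these polynomial names. *)
hide_const (open) UnivPoly.coeff UnivPoly.monom Module.module.smult

lemma dnum_simps [simp]: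
  "re (0::'a::comm_ring_1 dnum) = 0" "du (0::'a dnum) = 0"
  "re (1::'a::comm_ring_1 dnum) = 1" "du (1::'a dnum) = 0"
  "re (x + y) = re x + re y" "du (x + y) = du x + du y"
  "re (x - y) = re x - re y" "du (x - y) = du x - du y"
  "re (- x) = - re x" "du (- x) = - du x"
  "re (x * y) = re x * re y" "du (x * y) = re x * du y + du x * re y"
  by (simp_all add: zero_dnum_def one_dnum_def plus_dnum_def minus_dnum_def
      uminus_dnum_def times_dnum_def)

lemma re_sum: "re (sum f A) = (\<Sum>x\<in>A. re (f x))"
  by (induction A rule: infinite_finite_induct) auto

lemma du_sum: "du (sum f A) = (\<Sum>x\<in>A. du (f x))"
  by (induction A rule: infinite_finite_induct) auto

lemma emb_sum: "emb (sum f A) = (\<Sum>x\<in>A. emb (f x) :: 'a::comm_ring_1 dnum)"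
  by (rule dnum.expand) (simp add: re_sum du_sum)

lemma coeff_map_poly_re [simp]: "coeff (map_poly re f) i = re (coeff f i)"
  and coeff_map_poly_du [simp]: "coeff (map_poly du f) i = du (coeff f i)"
  by (simp_all add: coeff_map_poly)

lemma map_poly_re_add: "map_poly re (f + g) = map_poly re f + map_poly re g"
  and map_poly_du_add: "map_poly du (f + g) = map_poly du f + map_poly du g"
  and map_poly_re_diff: "map_poly re (f - g) = map_poly re f - map_poly re g"
  and map_poly_du_diff: "map_poly du (f - g) = map_poly du f - map_poly du g"
  by (simp_all add: poly_eq_iff)

lemma map_poly_re_mult: "map_poly re (f * g) = map_poly re f * map_poly re g"
  by (simp add: poly_eq_iff coeff_mult re_sum)

lemma map_poly_du_mult:
  "map_poly du (f * g) = map_poly re f * map_poly du g + map_poly du f * map_poly re g"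
  by (simp add: poly_eq_iff coeff_mult du_sum sum.distrib)

lemma map_poly_re_const [simp]: "map_poly re [:c:] = [:re c:]"
  and map_poly_du_const [simp]: "map_poly du [:c:] = [:du c:]"
  by (simp_all add: poly_eq_iff coeff_pCons split: nat.split)

lemma map_poly_re_monom [simp]: "map_poly re (monom c k) = monom (re c) k"
  and map_poly_du_monom [simp]: "map_poly du (monom c k) = monom (du c) k"
  by (simp_all add: map_poly_monom)

lemma coeff_map_poly_emb [simp]: "coeff (map_poly emb f) i = emb (coeff f i :: 'a::comm_ring_1)"
  by (simp add: coeff_map_poly zero_dnum_def)

lemma map_poly_emb_mult:
  "map_poly emb (f * g) = map_poly emb f * map_poly (emb :: 'a::comm_ring_1 \<Rightarrow> _) g"
  by (simp add: poly_eq_iff coeff_mult emb_sum times_dnum_def)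

lemma map_poly_emb_power: "map_poly emb (f ^ k) = map_poly (emb :: 'a::comm_ring_1 \<Rightarrow> _) f ^ k"
  by (induction k) (simp_all add: one_dnum_def map_poly_emb_mult)

lemma map_poly_emb_pCons:
  "map_poly emb (pCons a f) = pCons (emb a) (map_poly (emb :: 'a::comm_ring_1 \<Rightarrow> _) f)"
  by (simp add: map_poly_pCons zero_dnum_def)

lemma re_map_poly_emb [simp]: "map_poly re (map_poly emb f) = f"
  and du_map_poly_emb [simp]: "map_poly du (map_poly emb f) = 0"
  by (simp_all add: poly_eq_iff)

lemma diff_dvd_power_diff: "(x::'a::comm_ring_1) - y dvd x ^ k - y ^ k"
proof (induction k)
  case (Suc k)
  have "x ^ Suc k - y ^ Suc k = x * (x ^ k - y ^ k) + (x - y) * y ^ k"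
    by (simp add: algebra_simps)
  then show ?case using Suc by simp
qed simp

lemma Poly_map_upt: "Poly (map g [0..<n]) = (\<Sum>i<n. monom (g i) i)"
  by (rule poly_eqI) (simp add: coeff_sum nth_default_def coeff_monom)

lemma reduce_vec_congruent:
  fixes f :: "'r::comm_ring_1 poly"
  assumes "n > 0"
  shows "monom 1 n - [:lam:] dvd f - Poly (reduce_vec n lam f)"
proof -
  define a where "a k = coeff f k * lam ^ (k div n)" for k
  have "Poly (reduce_vec n lam f) =
      (\<Sum>i<n. \<Sum>k\<le>degree f. if k mod n = i then monom (a k) i else 0)"
    by (simp add: reduce_vec_def Poly_map_upt a_def monom_sum
        if_distrib[where f="\<lambda>c. monom c _"] cong: if_cong)
  also have "\<dots> = (\<Sum>k\<le>degree f. monom (a k) (k mod n))"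
    using assms by (subst sum.swap) simp
  finally have "f - Poly (reduce_vec n lam f) =
      (\<Sum>k\<le>degree f. monom (coeff f k) k - monom (a k) (k mod n))"
    by (simp add: sum_subtractf poly_as_sum_of_monoms)
  also have "monom 1 n - [:lam:] dvd \<dots>"
  proof (rule dvd_sum)
    fix k
    have "monom (coeff f k) k - monom (a k) (k mod n) =
          monom (coeff f k) (k mod n) * (monom 1 n ^ (k div n) - [:lam:] ^ (k div n))"
      by (subst (1) div_mult_mod_eq[of k n, symmetric])
        (simp add: a_def monom_power poly_const_pow right_diff_distrib mult_monom
          smult_monom flip: mult_smult_right)
    then show "monom 1 n - [:lam:] dvd monom (coeff f k) k - monom (a k) (k mod n)"
      by (simp add: diff_dvd_power_diff)
  qed
  finally show ?thesis .
qed

lemma degree_Poly_less: "length xs = n \<Longrightarrow> n > 0 \<Longrightarrow> degree (Poly xs) < n"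
proof -
  assume "length xs = n" "n > 0"
  moreover from this have "degree (Poly xs) \<le> n - 1"
    by (intro degree_le) (auto simp: nth_default_def)
  ultimately show ?thesis by simp
qed

lemma Poly_map2_add: "length c = length d \<Longrightarrow> Poly (map2 (+) c d) = Poly c + Poly d"
  by (induction c d rule: list_induct2) auto

lemma Poly_cshift:
  assumes "length c = n" and "n > 0"
  shows "Poly (cshift lam c) = [:0, 1:] * Poly c - (monom 1 n - [:lam:]) * [:last c:]"
proof -
  obtain b l where c: "c = b @ [l]"
    using assms by (cases c rule: rev_cases) auto
  with assms(1) have "length b = n - 1" by simp
  with c have "[:0, 1:] * Poly c = pCons 0 (Poly b) + monom l n"
    using assms(2) by (cases n) (simp_all add: Poly_snoc monom_Suc)
  then show ?thesis
    by (simp add: c cshift_def algebra_simps smult_monom)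
qed

lemma poly_ideal_monic_generator:
  fixes J :: "'a::field poly set"
  assumes "f \<in> J" "f \<noteq> 0"
    and add: "\<And>u v. u \<in> J \<Longrightarrow> v \<in> J \<Longrightarrow> u + v \<in> J"
    and mult: "\<And>u v. u \<in> J \<Longrightarrow> v * u \<in> J"
  obtains d where "d \<in> J" "lead_coeff d = 1" "\<And>u. u \<in> J \<Longrightarrow> d dvd u"
proof -
  obtain d0 where d0: "d0 \<in> J" "d0 \<noteq> 0"
    and min: "\<And>a. a \<in> J \<Longrightarrow> a \<noteq> 0 \<Longrightarrow> degree d0 \<le> degree a"
    using ex_has_least_nat[of "\<lambda>a. a \<in> J \<and> a \<noteq> 0" f degree] assms(1,2) by blast
  have "d0 dvd a" if "a \<in> J" for a
  proof -
    have "a + (- (a div d0)) * d0 \<in> J" using add[OF that mult[OF d0(1)]] .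
    then have "a mod d0 \<in> J" by (simp add: minus_div_mult_eq_mod)
    then have "a mod d0 = 0" using min degree_mod_less[OF d0(2), of a] by fastforce
    then show ?thesis by (simp add: mod_eq_0_iff_dvd)
  qed
  then show ?thesis
    using d0 mult[of d0 "[:inverse (lead_coeff d0):]"]
    by (intro that[of "smult (inverse (lead_coeff d0)) d0"]) (auto simp: smult_dvd_iff)
qed

lemma irreducible_imp_prime_elem_field_poly:
  fixes f :: "'a::field poly"
  assumes "irreducible f"
  shows "prime_elem f"
proof (rule prime_elemI)
  show "f \<noteq> 0" "\<not> is_unit f"
    using assms by (simp_all add: irreducible_def)
  fix a b assume "f dvd a * b"
  define S where "S = {x * f + y * a | x y. True}"
  have S_iff: "u \<in> S \<longleftrightarrow> (\<exists>x y. u = x * f + y * a)" for u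
    by (simp add: S_def)
  have fS: "f \<in> S" and aS: "a \<in> S"
    unfolding S_iff by (rule exI[of _ 1], rule exI[of _ 0], simp,
        rule exI[of _ 0], rule exI[of _ 1], simp)
  have add: "u + v \<in> S" if "u \<in> S" "v \<in> S" for u v
  proof -
    from that obtain x y x' y' where "u = x * f + y * a" "v = x' * f + y' * a"
      unfolding S_iff by (elim exE)
    then have "u + v = (x + x') * f + (y + y') * a" by (simp add: algebra_simps)
    then show ?thesis unfolding S_iff by (intro exI)
  qed
  have mult: "v * u \<in> S" if "u \<in> S" for u v
  proof -
    from that obtain x y where "u = x * f + y * a" unfolding S_iff by (elim exE)
    then have "v * u = (v * x) * f + (v * y) * a" by (simp add: algebra_simps)
    then show ?thesis unfolding S_iff by (intro exI)
  qed
  obtain d where "d \<in> S" "lead_coeff d = 1" and d_dvd: "\<And>u. u \<in> S \<Longrightarrow> d dvd u"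
    using poly_ideal_monic_generator[OF fS \<open>f \<noteq> 0\<close> add mult] by blast
  then obtain x y where d: "d = x * f + y * a" unfolding S_iff by (elim exE)
  have "f dvd d \<or> is_unit d" using irreducibleD'[OF assms d_dvd[OF fS]] .
  then show "f dvd a \<or> f dvd b"
  proof
    assume "f dvd d"
    then have "f dvd a" using d_dvd[OF aS] by (rule dvd_trans)
    then show ?thesis ..
  next
    assume "is_unit d"
    have "b * d = (b * x) * f + y * (a * b)" by (simp add: d algebra_simps)
    also have "f dvd \<dots>" by (rule dvd_add[OF dvd_triv_right dvd_mult[OF \<open>f dvd a * b\<close>]])
    finally have "f dvd b" by (simp only: dvd_mult_unit_iff[OF \<open>is_unit d\<close>])
    then show ?thesis ..
  qed
qed

lemma dvd_prime_elem_power_mult: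
  fixes f g d :: "'a::idom"
  assumes "prime_elem f" and "d dvd f ^ a * g"
  shows "\<exists>i\<le>a. \<exists>e. d = f ^ i * e \<and> e dvd g"
  using assms(2)
proof (induction a arbitrary: g)
  case 0
  then show ?case by simp
next
  case (Suc a)
  have f: "f \<noteq> 0" using assms(1) by (rule prime_elem_not_zeroI)
  have "d dvd f ^ a * (f * g)" using Suc.prems by (simp add: ac_simps)
  then obtain i e where i: "i \<le> a" and d: "d = f ^ i * e" and "e dvd f * g"
    using Suc.IH by blast
  from \<open>e dvd f * g\<close> obtain k where k: "f * g = e * k" by (rule dvdE)
  have "f dvd e * k" by (simp flip: k)
  with assms(1) have "f dvd e \<or> f dvd k" by (simp add: prime_elem_dvd_mult_iff)
  then show ?case
  proof
    assume "f dvd e"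
    then obtain e' where e: "e = f * e'" by (rule dvdE)
    with k have "f * g = f * (e' * k)" by (simp add: ac_simps)
    with f have "e' dvd g" by simp
    moreover have "d = f ^ Suc i * e'" using d e by (simp add: ac_simps)
    ultimately show ?case using i by (intro exI[of _ "Suc i"] exI[of _ e'] conjI) simp_all
  next
    assume "f dvd k"
    then obtain k' where "k = f * k'" by (rule dvdE)
    with k have "f * g = f * (e * k')" by (simp add: ac_simps)
    with f have "e dvd g" by simp
    then show ?case using i d by (intro exI[of _ i] exI[of _ e] conjI) simp_all
  qed
qed

lemma monic_dvd_prime_powers_iff:
  fixes f g d :: "'a::field poly"
  assumes "prime_elem f" "prime_elem g" "lead_coeff f = 1" "lead_coeff g = 1"
  shows "lead_coeff d = 1 \<and> d dvd f ^ a * g ^ b \<longleftrightarrow> (\<exists>i\<le>a. \<exists>j\<le>b. d = f ^ i * g ^ j)"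
proof
  assume "lead_coeff d = 1 \<and> d dvd f ^ a * g ^ b"
  then have "lead_coeff d = 1" and "d dvd f ^ a * g ^ b" by simp_all
  then obtain i e where i: "i \<le> a" and d: "d = f ^ i * e" and "e dvd g ^ b * 1"
    using dvd_prime_elem_power_mult[OF assms(1) \<open>d dvd f ^ a * g ^ b\<close>] by auto
  then obtain j u where j: "j \<le> b" and e: "e = g ^ j * u" and "is_unit u"
    using dvd_prime_elem_power_mult[OF assms(2) \<open>e dvd g ^ b * 1\<close>] by blast
  have "lead_coeff u = 1"
    using assms(3,4) \<open>lead_coeff d = 1\<close> by (simp add: d e lead_coeff_mult lead_coeff_power)
  moreover have "monom (lead_coeff u) 0 = u" using \<open>is_unit u\<close> by (rule is_unit_monom_trivial)
  ultimately have "u = 1" by (simp add: monom_0 one_pCons)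
  then show "\<exists>i\<le>a. \<exists>j\<le>b. d = f ^ i * g ^ j"
    using i j by (intro exI[of _ i] exI[of _ j] conjI) (simp_all add: d e)
next
  assume "\<exists>i\<le>a. \<exists>j\<le>b. d = f ^ i * g ^ j"
  then obtain i j where "i \<le> a" "j \<le> b" and d: "d = f ^ i * g ^ j" by blast
  then have "f ^ i dvd f ^ a" "g ^ j dvd g ^ b" by (simp_all add: le_imp_power_dvd)
  then show "lead_coeff d = 1 \<and> d dvd f ^ a * g ^ b"
    using assms(3,4) by (simp add: d lead_coeff_mult lead_coeff_power mult_dvd_mono)
qed

lemma irreducible_quadratic:
  fixes f :: "'a::field poly"
  assumes "degree f = 2" and "\<And>x. poly f x \<noteq> 0"
  shows "irreducible f"
proof (rule irreducibleI)
  show "f \<noteq> 0" using assms(1) by auto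
  then show "\<not> is_unit f" using assms(1) by (simp add: is_unit_iff_degree)
  have no_linear_factor: "degree q \<noteq> 1" if "q dvd f" for q
  proof
    assume "degree q = 1"
    then obtain u v where "q = [:v, u:]" "u \<noteq> 0" by (rule degree1_coeffs)
    moreover obtain k where "f = q * k" using \<open>q dvd f\<close> by (rule dvdE)
    ultimately have "poly f (- v / u) = 0" by (simp add: field_simps)
    with assms(2) show False by blast
  qed
  fix a b assume f: "f = a * b"
  then have "a \<noteq> 0" "b \<noteq> 0" using assms(1) by auto
  then have "degree a + degree b = 2" using f assms(1) by (simp add: degree_mult_eq)
  moreover have "degree a \<noteq> 1" "degree b \<noteq> 1"
    using no_linear_factor f by simp_all
  ultimately show "is_unit a \<or> is_unit b"
    using \<open>a \<noteq> 0\<close> \<open>b \<noteq> 0\<close> by (auto simp: is_unit_iff_degree)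
qed

lemma CHAR_eq_prime_of_card:
  fixes p :: nat
  assumes "prime p" and "card (UNIV :: 'a::{finite,field} set) = p ^ m"
  shows "CHAR('a) = p"
proof -
  have "prime CHAR('a)" by (rule prime_CHAR_semidom[OF finite_imp_CHAR_pos]) simp
  moreover have "CHAR('a) dvd p ^ m" using CHAR_dvd_CARD[where 'a='a] assms(2) by simp
  ultimately show ?thesis using assms(1) prime_dvd_power primes_dvd_imp_eq by blast
qed

lemma two_nonzero_of_odd_CHAR:
  assumes "odd CHAR('a::field)"
  shows "(2::'a) \<noteq> 0"
proof
  assume "(2::'a) = 0"
  then have "CHAR('a) dvd 2" using of_nat_eq_0_iff_char_dvd[where 'a='a, of 2] by simp
  then have "CHAR('a) \<le> 2" by (rule dvd_imp_le) simp
  moreover have "CHAR('a) \<noteq> 1" using of_nat_eq_0_iff_char_dvd[where 'a='a, of 1] by auto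
  ultimately show False using assms by presburger
qed

lemma binomial_power_CHAR:
  fixes a :: "'a::field"
  assumes "prime CHAR('a)" and "odd CHAR('a)"
  shows "(monom 1 k - [:a:]) ^ (CHAR('a) ^ s) = monom 1 (k * CHAR('a) ^ s) - [:a ^ (CHAR('a) ^ s):]"
proof -
  have "(monom 1 k + - [:a:]) ^ (CHAR('a) ^ s) = monom 1 k ^ (CHAR('a) ^ s) + (- [:a:]) ^ (CHAR('a) ^ s)"
    by (rule freshmans_dream') (simp_all add: assms(1))
  then show ?thesis
    using assms(2) unfolding diff_conv_add_uminus
    by (simp add: monom_power poly_const_pow)
qed

lemma eq_minus_half_square_squared:
  fixes \<gamma> \<alpha>0 :: "'a::field"
  assumes "(2::'a) \<noteq> 0" and "\<gamma> ^ 4 + 4 * \<alpha>0 = 0"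
  shows "\<alpha>0 = - ((\<gamma> ^ 2 / 2) ^ 2)"
proof -
  have "(4::'a) = 2 * 2" by simp
  then have "(4::'a) \<noteq> 0" using assms(1) by (simp only: mult_eq_0_iff) simp
  then show ?thesis
    using assms by (simp add: field_simps power2_eq_square power4_eq_xxxx eq_neg_iff_add_eq_0)
qed

lemma quadratic_pair_mult:
  fixes \<gamma> \<alpha>0 :: "'a::field"
  assumes "(2::'a) \<noteq> 0" and "\<alpha>0 = - ((\<gamma> ^ 2 / 2) ^ 2)"
  shows "[:\<gamma> ^ 2 / 2, \<gamma>, 1:] * [:\<gamma> ^ 2 / 2, - \<gamma>, 1:] = monom 1 4 - [:\<alpha>0:]"
proof -
  have "\<gamma> ^ 2 / 2 + \<gamma> ^ 2 / 2 - \<gamma> * \<gamma> = 0"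
    using assms(1) by (simp add: field_simps power2_eq_square)
  moreover have "monom (1::'a) 4 = [:0, 0, 0, 0, 1:]"
    by (simp add: numeral_eq_Suc monom_Suc)
  ultimately show ?thesis
    using assms(2) by (simp add: algebra_simps power2_eq_square)
qed

lemma irreducible_quadratic_of_nonsquare:
  fixes \<gamma> \<alpha>0 :: "'a::field"
  assumes two: "(2::'a) \<noteq> 0" and \<alpha>0: "\<alpha>0 = - ((\<gamma> ^ 2 / 2) ^ 2)" and "\<nexists>y. y ^ 2 = \<alpha>0"
  shows "irreducible [:\<gamma> ^ 2 / 2, \<gamma>, 1:]"
proof (rule irreducible_quadratic)
  fix x
  show "poly [:\<gamma> ^ 2 / 2, \<gamma>, 1:] x \<noteq> 0"
  proof
    assume "poly [:\<gamma> ^ 2 / 2, \<gamma>, 1:] x = 0"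
    then have "\<gamma> ^ 2 / 2 + x * (\<gamma> + x) = 0" by simp
    then have "\<gamma> ^ 2 + 2 * \<gamma> * x + 2 * x ^ 2 = 0"
      using two by (simp add: field_simps power2_eq_square)
    moreover have "(2 * x + \<gamma>) ^ 2 = 2 * (\<gamma> ^ 2 + 2 * \<gamma> * x + 2 * x ^ 2) - \<gamma> ^ 2"
      by (simp add: algebra_simps power2_eq_square)
    ultimately have "(2 * x + \<gamma>) ^ 2 = - (\<gamma> ^ 2)" by simp
    then have "((2 * x + \<gamma>) * \<gamma> / 2) ^ 2 = - ((\<gamma> ^ 2 / 2) ^ 2)"
      by (simp add: power_mult_distrib power_divide)
    with assms(3) \<alpha>0 show False by blast
  qed
qed simp

lemma nonsquare_of_nonsquare_power:
  assumes "\<nexists>y. y ^ 2 = (a::'a::comm_monoid_mult) ^ k"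
  shows "\<nexists>y. y ^ 2 = a"
proof
  assume "\<exists>y. y ^ 2 = a"
  then obtain y where "y ^ 2 = a" by blast
  have "(y ^ k) ^ 2 = (y ^ 2) ^ k" by (simp only: power_mult[symmetric] mult.commute)
  with \<open>y ^ 2 = a\<close> have "(y ^ k) ^ 2 = a ^ k" by simp
  with assms show False by blast
qed

lemma power_quadratic_pair_eq:
  fixes \<alpha> \<alpha>0 \<gamma> :: "'a::field"
  assumes "CHAR('a) = p" "prime p" "odd p"
    and "\<alpha>0 ^ (p ^ s) = \<alpha>" "\<alpha>0 = - ((\<gamma> ^ 2 / 2) ^ 2)"
  shows "([:\<gamma> ^ 2 / 2, \<gamma>, 1:] * [:\<gamma> ^ 2 / 2, - \<gamma>, 1:]) ^ (p ^ s) = monom 1 (4 * p ^ s) - [:\<alpha>:]"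
proof -
  have two: "(2::'a) \<noteq> 0" using two_nonzero_of_odd_CHAR assms(1,3) by blast
  have "([:\<gamma> ^ 2 / 2, \<gamma>, 1:] * [:\<gamma> ^ 2 / 2, - \<gamma>, 1:]) ^ (p ^ s) = (monom 1 4 - [:\<alpha>0:]) ^ (p ^ s)"
    by (simp only: quadratic_pair_mult[OF two assms(5)])
  also have "\<dots> = monom 1 (4 * p ^ s) - [:\<alpha>:]"
    using binomial_power_CHAR[of 4 \<alpha>0 s] assms(1-4) by simp
  finally show ?thesis .
qed

locale dual_constacyclic =
  fixes n :: nat and \<alpha> \<beta> :: "'a::field"
  assumes n_pos: "n > 0" and \<beta>_nonzero: "\<beta> \<noteq> 0"
begin

definition base :: "'a poly" where
  "base = monom 1 n - [:\<alpha>:]"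

definition modulus :: "'a poly" where
  "modulus = base ^ 2"

text \<open>The isomorphism \<open>R[x]/\<langle>x\<^sup>n - (\<alpha> + \<beta>u)\<rangle> \<cong> F[x]/\<langle>(x\<^sup>n - \<alpha>)\<^sup>2\<rangle>\<close>
  on representatives: \<open>a + bu \<mapsto> a + \<beta>\<^sup>-\<^sup>1 (x\<^sup>n - \<alpha>) b\<close>.\<close>

definition to_field_poly :: "'a dnum poly \<Rightarrow> 'a poly" where
  "to_field_poly f = map_poly re f + smult (inverse \<beta>) (base * map_poly du f)"

definition word_poly :: "'a dnum list \<Rightarrow> 'a poly" where
  "word_poly c = to_field_poly (Poly c)"

definition divisor_code :: "'a poly \<Rightarrow> 'a dnum list set" where
  "divisor_code d = {c. length c = n \<and> d dvd word_poly c}"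

lemma degree_base: "degree base = n"
  using n_pos unfolding base_def diff_conv_add_uminus
  by (subst degree_add_eq_left) (simp_all add: degree_monom_eq)

lemma base_nonzero: "base \<noteq> 0"
  using degree_base n_pos by auto

lemma to_field_poly_add: "to_field_poly (f + g) = to_field_poly f + to_field_poly g"
  by (simp add: to_field_poly_def map_poly_re_add map_poly_du_add algebra_simps smult_add_right)

lemma to_field_poly_diff: "to_field_poly (f - g) = to_field_poly f - to_field_poly g"
  by (simp add: to_field_poly_def map_poly_re_diff map_poly_du_diff algebra_simps
      smult_diff_right)

lemma to_field_poly_mult:
  "[to_field_poly (f * g) = to_field_poly f * to_field_poly g] (mod modulus)"
proof -
  have "to_field_poly (f * g) - to_field_poly f * to_field_poly g =
      modulus * (- smult (inverse \<beta> ^ 2) (map_poly du f * map_poly du g))"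
    by (simp add: to_field_poly_def map_poly_re_mult map_poly_du_mult modulus_def
        power2_eq_square algebra_simps smult_add_right smult_diff_right)
  then show ?thesis by (simp only: cong_iff_dvd_diff dvd_triv_left)
qed

lemma to_field_poly_emb [simp]: "to_field_poly (map_poly emb f) = f"
  by (simp add: to_field_poly_def)

lemma to_field_poly_X [simp]: "to_field_poly [:0, 1:] = [:0, 1:]"
  by (simp add: to_field_poly_def map_poly_pCons)

lemma to_field_poly_constacyclic: "to_field_poly (monom 1 n - [:D \<alpha> \<beta>:]) = 0"
  using \<beta>_nonzero by (simp add: to_field_poly_def map_poly_re_diff map_poly_du_diff base_def)

lemma to_field_poly_multiple_constacyclic:
  "[to_field_poly ((monom 1 n - [:D \<alpha> \<beta>:]) * f) = 0] (mod modulus)"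
  using to_field_poly_mult[of "monom 1 n - [:D \<alpha> \<beta>:]" f] by (simp add: to_field_poly_constacyclic)

lemma word_poly_reduce_vec:
  "[word_poly (reduce_vec n (D \<alpha> \<beta>) f) = to_field_poly f] (mod modulus)"
proof -
  obtain t where "f - Poly (reduce_vec n (D \<alpha> \<beta>) f) = (monom 1 n - [:D \<alpha> \<beta>:]) * t"
    using reduce_vec_congruent[OF n_pos] by (rule dvdE)
  then have "[to_field_poly f - word_poly (reduce_vec n (D \<alpha> \<beta>) f) = 0] (mod modulus)"
    using to_field_poly_multiple_constacyclic[of t]
    by (simp add: word_poly_def flip: to_field_poly_diff)
  then show ?thesis by (simp only: cong_diff_iff_cong_0 cong_sym)
qed

lemma degree_word_poly:
  assumes "length c = n"
  shows "degree (word_poly c) < 2 * n"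
proof -
  have "degree (Poly c) < n" using degree_Poly_less[OF assms n_pos] .
  then have "degree (map_poly re (Poly c)) < n" "degree (map_poly du (Poly c)) < n"
    by (meson le_less_trans map_poly_degree_leq)+
  then have "degree (map_poly re (Poly c)) < 2 * n"
    "degree (smult (inverse \<beta>) (base * map_poly du (Poly c))) < 2 * n"
    using degree_mult_le[of base "map_poly du (Poly c)"] degree_base by auto
  then show ?thesis by (simp add: word_poly_def to_field_poly_def degree_add_less)
qed

lemma word_poly_cong_imp_eq:
  assumes "length c = n" "length c' = n" and "[word_poly c = word_poly c'] (mod modulus)"
  shows "c = c'"
proof -
  define A where "A = map_poly re (Poly c) - map_poly re (Poly c')"
  define B where "B = map_poly du (Poly c) - map_poly du (Poly c')"
  have "degree (word_poly c - word_poly c') < degree modulus"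
    using degree_word_poly[OF assms(1)] degree_word_poly[OF assms(2)]
    by (simp add: modulus_def degree_power_eq base_nonzero degree_base degree_diff_less)
  moreover have "modulus dvd word_poly c - word_poly c'"
    using assms(3) by (simp add: cong_iff_dvd_diff)
  ultimately have "word_poly c - word_poly c' = 0"
    using dvd_imp_degree_le by fastforce
  then have AB: "A = - smult (inverse \<beta>) (base * B)"
    by (simp add: word_poly_def to_field_poly_def A_def B_def algebra_simps smult_diff_right
        eq_neg_iff_add_eq_0)
  have "degree A < n"
    unfolding A_def using degree_Poly_less[OF assms(1) n_pos] degree_Poly_less[OF assms(2) n_pos]
    by (meson degree_diff_less le_less_trans map_poly_degree_leq)
  then have "degree (base * B) < n"
    using AB \<beta>_nonzero by simp
  have "B = 0"
  proof (rule ccontr)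
    assume "B \<noteq> 0"
    then have "degree (base * B) = n + degree B"
      using base_nonzero by (simp add: degree_mult_eq degree_base)
    with \<open>degree (base * B) < n\<close> show False by simp
  qed
  with AB have "A = 0" by simp
  show "c = c'"
  proof (rule nth_equalityI)
    show "length c = length c'" using assms by simp
    fix i assume "i < length c"
    then have "re (c ! i) = re (c' ! i)" "du (c ! i) = du (c' ! i)"
      using arg_cong[OF \<open>A = 0\<close>, of "\<lambda>p. coeff p i"]
        arg_cong[OF \<open>B = 0\<close>, of "\<lambda>p. coeff p i"] assms(1,2)
      by (simp_all add: A_def B_def nth_default_def)
    then show "c ! i = c' ! i" by (simp add: dnum.expand)
  qed
qed

lemma word_poly_replicate_zero: "word_poly (replicate n 0) = 0"
  by (simp add: word_poly_def to_field_poly_def)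

lemma word_poly_map2_add:
  "length c = length d \<Longrightarrow> word_poly (map2 (+) c d) = word_poly c + word_poly d"
  by (simp add: word_poly_def Poly_map2_add to_field_poly_add)

lemma word_poly_map_mult:
  "[word_poly (map ((*) r) c) = to_field_poly [:r:] * word_poly c] (mod modulus)"
  using to_field_poly_mult[of "[:r:]" "Poly c"] by (simp add: word_poly_def Poly_map)

lemma word_poly_cshift:
  assumes "length c = n"
  shows "[word_poly (cshift (D \<alpha> \<beta>) c) = [:0, 1:] * word_poly c] (mod modulus)"
proof -
  have "word_poly (cshift (D \<alpha> \<beta>) c) = to_field_poly ([:0, 1:] * Poly c)
      - to_field_poly ((monom 1 n - [:D \<alpha> \<beta>:]) * [:last c:])"
    by (simp only: word_poly_def Poly_cshift[OF assms n_pos] to_field_poly_diff)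
  also have "[\<dots> = to_field_poly [:0, 1:] * to_field_poly (Poly c) - 0] (mod modulus)"
    by (rule cong_diff[OF to_field_poly_mult to_field_poly_multiple_constacyclic])
  finally show ?thesis by (simp add: word_poly_def)
qed

lemma divisor_code_constacyclic:
  assumes "d dvd modulus"
  shows "constacyclic_code n (D \<alpha> \<beta>) (divisor_code d)"
proof -
  have dvd_iff: "d dvd f \<longleftrightarrow> d dvd g" if "[f = g] (mod modulus)" for f g
    using cong_dvd_iff[OF cong_dvd_modulus[OF that assms]] .
  have "map ((*) r) c \<in> divisor_code d" if "c \<in> divisor_code d" for r c
    using that dvd_iff[OF word_poly_map_mult] by (auto simp: divisor_code_def)
  moreover have "cshift (D \<alpha> \<beta>) c \<in> divisor_code d" if "c \<in> divisor_code d" for c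
  proof -
    from that have c: "length c = n" "d dvd word_poly c" by (simp_all add: divisor_code_def)
    have "d dvd [:0, 1:] * word_poly c" using c(2) by (rule dvd_mult)
    then have "d dvd word_poly (cshift (D \<alpha> \<beta>) c)"
      using dvd_iff[OF word_poly_cshift[OF c(1)]] by (simp only:)
    moreover have "length (cshift (D \<alpha> \<beta>) c) = n"
      using c(1) n_pos by (simp add: cshift_def)
    ultimately show ?thesis by (simp add: divisor_code_def)
  qed
  ultimately show ?thesis
    unfolding constacyclic_code_def
    by (auto simp: divisor_code_def word_poly_replicate_zero word_poly_map2_add)
qed

lemma principal_code_eq_divisor_code:
  assumes "d dvd modulus"
  shows "principal_code n (D \<alpha> \<beta>) (map_poly emb d) = divisor_code d"
proof -
  have word_cong: "[word_poly (reduce_vec n (D \<alpha> \<beta>) (a * map_poly emb d)) =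
      to_field_poly a * d] (mod modulus)" for a
    using cong_trans[OF word_poly_reduce_vec to_field_poly_mult[of a "map_poly emb d"]] by simp
  show ?thesis
  proof (intro equalityI subsetI)
    fix c assume "c \<in> principal_code n (D \<alpha> \<beta>) (map_poly emb d)"
    then obtain a where c: "c = reduce_vec n (D \<alpha> \<beta>) (a * map_poly emb d)"
      by (auto simp: principal_code_def)
    have "d dvd word_poly c"
      using cong_dvd_iff[OF cong_dvd_modulus[OF word_cong assms]] by (simp add: c)
    then show "c \<in> divisor_code d" by (simp add: divisor_code_def c reduce_vec_def)
  next
    fix c assume "c \<in> divisor_code d"
    then have c: "length c = n" and "d dvd word_poly c" by (simp_all add: divisor_code_def)
    from \<open>d dvd word_poly c\<close> obtain b where b: "word_poly c = d * b" by (rule dvdE)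
    define c' where "c' = reduce_vec n (D \<alpha> \<beta>) (map_poly emb b * map_poly emb d)"
    have "[word_poly c' = word_poly c] (mod modulus)"
      using word_cong[of "map_poly emb b"] by (simp add: c'_def b mult.commute)
    moreover have "length c' = n" by (simp add: c'_def reduce_vec_def)
    ultimately have "c' = c" using word_poly_cong_imp_eq[OF _ c] by blast
    then show "c \<in> principal_code n (D \<alpha> \<beta>) (map_poly emb d)"
      unfolding principal_code_def c'_def by blast
  qed
qed


definition code_ideal :: "'a dnum list set \<Rightarrow> 'a poly set" where
  "code_ideal C = {f. \<exists>c\<in>C. [f = word_poly c] (mod modulus)}"

context
  fixes C assumes code: "constacyclic_code n (D \<alpha> \<beta>) C"
begin

lemma code_length: "c \<in> C \<Longrightarrow> length c = n"
  using code by (auto simp: constacyclic_code_def)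

lemma code_ideal_word_poly: "c \<in> C \<Longrightarrow> word_poly c \<in> code_ideal C"
  unfolding code_ideal_def using cong_refl by blast

lemma modulus_in_code_ideal: "modulus \<in> code_ideal C"
proof -
  have "replicate n 0 \<in> C" using code by (simp add: constacyclic_code_def)
  moreover have "[modulus = word_poly (replicate n 0)] (mod modulus)"
    by (simp add: word_poly_replicate_zero cong_0_iff)
  ultimately show ?thesis unfolding code_ideal_def by blast
qed

lemma code_ideal_add:
  assumes "f \<in> code_ideal C" "g \<in> code_ideal C"
  shows "f + g \<in> code_ideal C"
proof -
  from assms obtain c d where "c \<in> C" "d \<in> C"
    and "[f = word_poly c] (mod modulus)" "[g = word_poly d] (mod modulus)"
    by (auto simp: code_ideal_def)
  moreover from this have "word_poly (map2 (+) c d) = word_poly c + word_poly d"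
    by (simp add: code_length word_poly_map2_add)
  ultimately have "[f + g = word_poly (map2 (+) c d)] (mod modulus)"
    by (simp add: cong_add)
  moreover have "map2 (+) c d \<in> C"
    using code \<open>c \<in> C\<close> \<open>d \<in> C\<close> by (simp add: constacyclic_code_def)
  ultimately show ?thesis unfolding code_ideal_def by blast
qed

lemma code_ideal_smult:
  assumes "f \<in> code_ideal C"
  shows "smult a f \<in> code_ideal C"
proof -
  from assms obtain c where "c \<in> C" and "[f = word_poly c] (mod modulus)"
    by (auto simp: code_ideal_def)
  then have "[smult a f = smult a (word_poly c)] (mod modulus)"
    using cong_scalar_left[of f "word_poly c" modulus "[:a:]"] by simp
  moreover have "[word_poly (map ((*) (emb a)) c) = smult a (word_poly c)] (mod modulus)"
    using word_poly_map_mult[of "emb a" c] by (simp add: to_field_poly_def)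
  ultimately have "[smult a f = word_poly (map ((*) (emb a)) c)] (mod modulus)"
    using cong_sym cong_trans by blast
  moreover have "map ((*) (emb a)) c \<in> C"
    using code \<open>c \<in> C\<close> by (simp add: constacyclic_code_def)
  ultimately show ?thesis unfolding code_ideal_def by blast
qed

lemma code_ideal_X_mult:
  assumes "f \<in> code_ideal C"
  shows "[:0, 1:] * f \<in> code_ideal C"
proof -
  from assms obtain c where "c \<in> C" and "[f = word_poly c] (mod modulus)"
    by (auto simp: code_ideal_def)
  then have "[[:0, 1:] * f = word_poly (cshift (D \<alpha> \<beta>) c)] (mod modulus)"
    using cong_sym[OF word_poly_cshift[OF code_length]] cong_scalar_left cong_trans by blast
  moreover have "cshift (D \<alpha> \<beta>) c \<in> C"
    using code \<open>c \<in> C\<close> by (simp add: constacyclic_code_def)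
  ultimately show ?thesis by (auto simp: code_ideal_def)
qed

lemma code_ideal_mult:
  assumes "f \<in> code_ideal C"
  shows "g * f \<in> code_ideal C"
proof (induction g)
  case (pCons a g)
  have "pCons a g * f = smult a f + [:0, 1:] * (g * f)" by simp
  then show ?case using pCons.IH assms code_ideal_add code_ideal_smult code_ideal_X_mult by simp
qed (use code_ideal_smult[OF modulus_in_code_ideal, of 0] in simp)

lemma constacyclic_code_eq_divisor_code:
  obtains d where "lead_coeff d = 1" "d dvd modulus" "C = divisor_code d"
proof -
  have "modulus \<noteq> 0" by (simp add: modulus_def base_nonzero)
  then obtain d where d: "d \<in> code_ideal C" "lead_coeff d = 1"
    and d_dvd: "\<And>f. f \<in> code_ideal C \<Longrightarrow> d dvd f"
    using poly_ideal_monic_generator[OF modulus_in_code_ideal _ code_ideal_add code_ideal_mult]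
    by blast
  have "C = divisor_code d"
  proof (intro equalityI subsetI)
    fix c assume "c \<in> C"
    then show "c \<in> divisor_code d"
      by (simp add: divisor_code_def code_length d_dvd code_ideal_word_poly)
  next
    fix c assume "c \<in> divisor_code d"
    then have c: "length c = n" and "d dvd word_poly c" by (simp_all add: divisor_code_def)
    from \<open>d dvd word_poly c\<close> obtain t where "word_poly c = d * t" by (rule dvdE)
    then have "word_poly c \<in> code_ideal C" using code_ideal_mult[OF d(1), of t] by (simp add: mult.commute)
    then obtain c' where "c' \<in> C" "[word_poly c = word_poly c'] (mod modulus)"
      by (auto simp: code_ideal_def)
    then show "c \<in> C" using word_poly_cong_imp_eq[OF c(1) code_length] by blast
  qed
  then show ?thesis using d d_dvd modulus_in_code_ideal that by blast
qed

end

theorem constacyclic_code_iff_principal_code: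
  "constacyclic_code n (D \<alpha> \<beta>) C \<longleftrightarrow>
    (\<exists>d. lead_coeff d = 1 \<and> d dvd modulus \<and> C = principal_code n (D \<alpha> \<beta>) (map_poly emb d))"
proof
  assume "constacyclic_code n (D \<alpha> \<beta>) C"
  then obtain d where "lead_coeff d = 1" "d dvd modulus" "C = divisor_code d"
    by (rule constacyclic_code_eq_divisor_code)
  then show "\<exists>d. lead_coeff d = 1 \<and> d dvd modulus \<and>
      C = principal_code n (D \<alpha> \<beta>) (map_poly emb d)"
    using principal_code_eq_divisor_code by auto
qed (auto simp: principal_code_eq_divisor_code divisor_code_constacyclic)

lemma constacyclic_code_iff_prime_powers:
  assumes "prime_elem f" "prime_elem g" "lead_coeff f = 1" "lead_coeff g = 1"
    and modulus: "modulus = f ^ a * g ^ b"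
  shows "constacyclic_code n (D \<alpha> \<beta>) C \<longleftrightarrow>
    (\<exists>i j. i \<le> a \<and> j \<le> b \<and>
      C = principal_code n (D \<alpha> \<beta>) (map_poly emb f ^ i * map_poly emb g ^ j))"
proof -
  have divisor_iff: "lead_coeff d = 1 \<and> d dvd modulus \<longleftrightarrow> (\<exists>i\<le>a. \<exists>j\<le>b. d = f ^ i * g ^ j)"
    for d unfolding modulus by (rule monic_dvd_prime_powers_iff[OF assms(1-4)])
  show ?thesis
    unfolding constacyclic_code_iff_principal_code
  proof
    assume "\<exists>d. lead_coeff d = 1 \<and> d dvd modulus \<and>
      C = principal_code n (D \<alpha> \<beta>) (map_poly emb d)"
    then obtain d where "lead_coeff d = 1 \<and> d dvd modulus"
      and C: "C = principal_code n (D \<alpha> \<beta>) (map_poly emb d)" by blast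
    then obtain i j where "i \<le> a" "j \<le> b" "d = f ^ i * g ^ j" unfolding divisor_iff by blast
    then show "\<exists>i j. i \<le> a \<and> j \<le> b \<and>
      C = principal_code n (D \<alpha> \<beta>) (map_poly emb f ^ i * map_poly emb g ^ j)"
      using C by (intro exI[of _ i] exI[of _ j]) (simp add: map_poly_emb_mult map_poly_emb_power)
  next
    assume "\<exists>i j. i \<le> a \<and> j \<le> b \<and>
      C = principal_code n (D \<alpha> \<beta>) (map_poly emb f ^ i * map_poly emb g ^ j)"
    then obtain i j where "i \<le> a" "j \<le> b"
      and C: "C = principal_code n (D \<alpha> \<beta>) (map_poly emb f ^ i * map_poly emb g ^ j)" by blast
    then have "lead_coeff (f ^ i * g ^ j) = 1 \<and> f ^ i * g ^ j dvd modulus"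
      unfolding divisor_iff by blast
    then show "\<exists>d. lead_coeff d = 1 \<and> d dvd modulus \<and>
      C = principal_code n (D \<alpha> \<beta>) (map_poly emb d)"
      using C by (intro exI[of _ "f ^ i * g ^ j"]) (simp add: map_poly_emb_mult map_poly_emb_power)
  qed
qed

end

theorem theorem3p5:
  fixes p m s :: nat
    and \<alpha> \<beta> \<alpha>0 \<gamma> :: "'a::{finite,field}" and C :: "'a dnum list set"
  assumes "prime p" and "odd p" and "m > 0" and "s > 0"
    and "card (UNIV :: 'a set) = p ^ m" and "p ^ m mod 4 = 3"
    and "\<alpha> \<noteq> 0" and "\<not> (\<exists>y. y ^ 2 = \<alpha>)"
    and "\<alpha>0 ^ (p ^ s) = \<alpha>"
    and "\<gamma> ^ 4 + 4 * \<alpha>0 = 0"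
    and "\<beta> \<noteq> 0"
  shows "constacyclic_code (4 * p ^ s) (D \<alpha> \<beta>) C \<longleftrightarrow>
    (\<exists>i j. i \<le> 2 * p ^ s \<and> j \<le> 2 * p ^ s \<and>
       C = principal_code (4 * p ^ s) (D \<alpha> \<beta>)
             ([:emb (\<gamma> ^ 2 / 2), emb \<gamma>, 1:] ^ i *
              [:emb (\<gamma> ^ 2 / 2), emb (- \<gamma>), 1:] ^ j))"
proof -
  define f1 where "f1 = [:\<gamma> ^ 2 / 2, \<gamma>, 1:]"
  define f2 where "f2 = [:\<gamma> ^ 2 / 2, - \<gamma>, 1:]"
  have char: "CHAR('a) = p" using CHAR_eq_prime_of_card assms(1,5) .
  then have two: "(2::'a) \<noteq> 0" using two_nonzero_of_odd_CHAR assms(2) by blast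
  have \<alpha>0: "\<alpha>0 = - ((\<gamma> ^ 2 / 2) ^ 2)"
    using eq_minus_half_square_squared[OF two assms(10)] .
  have "\<nexists>y. y ^ 2 = \<alpha>0" using nonsquare_of_nonsquare_power[of \<alpha>0] assms(8,9) by blast
  then have prime: "prime_elem f1" "prime_elem f2"
    using irreducible_quadratic_of_nonsquare[OF two \<alpha>0]
      irreducible_quadratic_of_nonsquare[OF two, of \<alpha>0 "- \<gamma>"] \<alpha>0
    by (simp_all add: f1_def f2_def irreducible_imp_prime_elem_field_poly)
  have monic: "lead_coeff f1 = 1" "lead_coeff f2 = 1" by (simp_all add: f1_def f2_def)
  interpret dual_constacyclic "4 * p ^ s" \<alpha> \<beta>
    using assms(1,11) by unfold_locales (simp_all add: prime_gt_0_nat)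
  have "base = (f1 * f2) ^ p ^ s"
    unfolding base_def f1_def f2_def by (rule sym, rule power_quadratic_pair_eq[OF char assms(1,2,9) \<alpha>0])
  then have "modulus = f1 ^ (2 * p ^ s) * f2 ^ (2 * p ^ s)"
    unfolding modulus_def by (simp add: power_mult_distrib ac_simps flip: power_mult)
  from constacyclic_code_iff_prime_powers[OF prime monic this] show ?thesis
    by (simp add: f1_def f2_def map_poly_emb_pCons one_dnum_def)
qed

end
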